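(* Let $A\subseteq\mathbb{N}$ be a set whose natural density $\mathrm{dens}(A)$ exists and is positive, and let $m,\gamma$ be integers with $2\le\gamma<m$. Then for every $k\ge 1$, \[ \underline{\mathrm{dens}}\Big(A\cap \bigcup_{n\in R_k}\big([m^n,\gamma m^n]\cap\mathbb{N}\big)\Big)>0, \] where $R_k=\{2^{k-1}(2j+1): j\in\mathbb{N}_0\}$.
   Context: $\mathbb{N}=\{1,2,\dots\}$, $\mathbb{N}_0=\mathbb{N}\cup\{0\}$. For $A\subseteq\mathbb{N}$, $\underline{\mathrm{dens}}(A)=\liminf_{n\to\infty}\#(A\cap[1,n])/n$ and $\mathrm{dens}(A)=\lim_{n\to\infty}\#(A\cap[1,n])/n$ when this limit exists. Equivalently, $R_k=\{n\in\mathbb{N}: v_2(n)+1=k\}$ where $v_2$ is the $2$-adic valuation. *)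

theory Defs
  imports "HOL-Analysis.Analysis"
begin

definition count_ratio :: "nat set \<Rightarrow> nat \<Rightarrow> real" where
  "count_ratio A n = real (card (A \<inter> {1..n})) / real n"

definition lower_dens :: "nat set \<Rightarrow> ereal" where
  "lower_dens A = liminf (\<lambda>n. ereal (count_ratio A n))"

definition has_dens :: "nat set \<Rightarrow> real \<Rightarrow> bool" where
  "has_dens A d \<longleftrightarrow> (count_ratio A \<longlongrightarrow> d) sequentially"

definition R :: "nat \<Rightarrow> nat set" where
  "R k = {2 ^ (k - 1) * (2 * j + 1) | j. True}"

end

theory Submission
  imports Defs
begin

text \<open>
  Since A has density d, the dilated interval [M, \<gamma> M] contains about d (\<gamma> - 1) M elements
  of A once M is large. Writing R k as the progression 2^(k-1) + 2^k j, every large N lies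
  between \<gamma> m^n and \<gamma> m^n m^(2^k) for some n \<in> R k, so [m^n, \<gamma> m^n] \<subseteq> [1, N] carries a fixed
  positive proportion of N elements of the set in question.
\<close>

lemma card_dilated_interval_eventually_ge:
  fixes A :: "nat set" and \<gamma> :: nat
  assumes "has_dens A d" "\<gamma> \<ge> 1" "c < d * (real \<gamma> - 1)"
  shows "eventually (\<lambda>M. c * real M \<le> real (card (A \<inter> {M..\<gamma> * M}))) sequentially"
proof -
  have lim: "count_ratio A \<longlonglongrightarrow> d"
    using assms(1) unfolding has_dens_def .
  have "(\<lambda>M. count_ratio A (\<gamma> * M)) \<longlonglongrightarrow> d"
    using filterlim_compose[OF lim mult_nat_left_at_top] assms(2) by simp
  then have "(\<lambda>M. real \<gamma> * count_ratio A (\<gamma> * M) - count_ratio A M) \<longlonglongrightarrow> real \<gamma> * d - d"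
    using lim by (intro tendsto_intros)
  then have "eventually (\<lambda>M. c < real \<gamma> * count_ratio A (\<gamma> * M) - count_ratio A M) sequentially"
    using assms(3) by (intro order_tendstoD(1)) (auto simp: algebra_simps)
  then show ?thesis
    using eventually_gt_at_top[of 0]
  proof eventually_elim
    case (elim M)
    have "c * M < (real \<gamma> * count_ratio A (\<gamma> * M) - count_ratio A M) * M"
      using elim by simp
    also have "\<dots> = real (card (A \<inter> {1..\<gamma> * M})) - real (card (A \<inter> {1..M}))"
      using elim assms(2) by (simp add: left_diff_distrib count_ratio_def)
    also have "\<dots> \<le> real (card (A \<inter> {M..\<gamma> * M}))"
    proof -
      have "card (A \<inter> {1..\<gamma> * M}) \<le> card (A \<inter> {1..M}) + card (A \<inter> {M..\<gamma> * M})"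
        by (rule order_trans[OF card_mono card_Un_le]) auto
      then show ?thesis
        by linarith
    qed
    finally show ?case
      by simp
  qed
qed

lemma arith_progression_in_R: "k \<ge> 1 \<Longrightarrow> 2 ^ (k - 1) + 2 ^ k * j \<in> R k"
  unfolding R_def by (cases k) (auto simp: algebra_simps)

lemma power_bracket_in_R:
  fixes m \<gamma> k N :: nat
  assumes "k \<ge> 1" "m \<ge> 2" "\<gamma> \<ge> 1" "\<gamma> * m ^ 2 ^ (k - 1) \<le> N"
  obtains n where "n \<in> R k" "\<gamma> * m ^ n \<le> N" "N < \<gamma> * m ^ n * m ^ 2 ^ k"
proof -
  define f where "f j = \<gamma> * m ^ (2 ^ (k - 1) + 2 ^ k * j)" for j
  have "N < f (Suc N)"
  proof -
    have "N < 2 ^ (k - 1) + 2 ^ k * Suc N"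
      using mult_le_mono1[of 1 "2 ^ k" "Suc N"] by simp
    also have "\<dots> < 2 ^ (2 ^ (k - 1) + 2 ^ k * Suc N)"
      by (rule less_exp)
    also have "\<dots> \<le> m ^ (2 ^ (k - 1) + 2 ^ k * Suc N)"
      using assms(2) by (simp add: power_mono)
    also have "\<dots> \<le> f (Suc N)"
      using assms(3) unfolding f_def by simp
    finally show ?thesis .
  qed
  moreover have "\<not> N < f 0"
    using assms(4) unfolding f_def by simp
  ultimately obtain j where "f j \<le> N" "N < f (Suc j)"
    using ex_least_nat_less[of "\<lambda>j. N < f j"] by (auto simp: not_less)
  moreover have "f (Suc j) = f j * m ^ 2 ^ k"
    unfolding f_def by (simp add: power_add)
  ultimately have "f j \<le> N" "N < f j * m ^ 2 ^ k"
    by simp_all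
  then show ?thesis
    unfolding f_def by (rule that[OF arith_progression_in_R[OF assms(1)]])
qed

lemma count_ratio_ge_of_subset:
  fixes c K M :: real
  assumes "S \<subseteq> B \<inter> {1..N}" "c * M \<le> card S" "0 \<le> c" "0 \<le> M" "0 < N" "real N \<le> K * M"
  shows "c / K \<le> count_ratio B N"
proof -
  have "card S \<le> card (B \<inter> {1..N})"
    using assms(1) by (intro card_mono) auto
  have "c / K = c * M / (K * M)"
    using assms(5,6) by (cases "M = 0") auto
  also have "\<dots> \<le> c * M / N"
    using assms(3-6) by (intro divide_left_mono) auto
  also have "\<dots> \<le> card (B \<inter> {1..N}) / N"
    using assms(2) \<open>card S \<le> card (B \<inter> {1..N})\<close> by (intro divide_right_mono) auto
  finally show ?thesis
    unfolding count_ratio_def .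
qed

lemma lower_dens_pos_of_eventually_ge:
  assumes "0 < c" "\<forall>\<^sub>F N in sequentially. c \<le> count_ratio B N"
  shows "lower_dens B > 0"
proof -
  have "ereal c \<le> lower_dens B"
    unfolding lower_dens_def using assms(2) by (intro Liminf_bounded) (auto elim: eventually_mono)
  then show ?thesis
    using assms(1) by (meson ereal_less(2) less_le_trans)
qed

theorem lemma2p2:
  fixes A :: "nat set" and d :: real and m \<gamma> k :: nat
  assumes "A \<subseteq> {1..}"
    and "has_dens A d" and "d > 0"
    and "2 \<le> \<gamma>" and "\<gamma> < m"
    and "k \<ge> 1"
  shows "lower_dens (A \<inter> (\<Union>n\<in>R k. {m ^ n .. \<gamma> * m ^ n})) > 0"
proof (rule lower_dens_pos_of_eventually_ge)
  define c where "c = d * (real \<gamma> - 1) / 2"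
  define K where "K = \<gamma> * m ^ 2 ^ k"
  have "c > 0" "K > 0"
    using assms unfolding c_def K_def by auto
  then show "0 < c / K"
    by simp
  obtain M0 where M0: "\<And>M. M \<ge> M0 \<Longrightarrow> c * M \<le> card (A \<inter> {M..\<gamma> * M})"
    using card_dilated_interval_eventually_ge[OF assms(2), of \<gamma> c] assms(3,4)
    unfolding c_def eventually_sequentially by auto
  show "\<forall>\<^sub>F N in sequentially. c / K \<le> count_ratio (A \<inter> (\<Union>n\<in>R k. {m ^ n .. \<gamma> * m ^ n})) N"
  proof (rule eventually_sequentiallyI)
    fix N
    assume N: "max (\<gamma> * m ^ 2 ^ (k - 1)) (K * M0) \<le> N"
    obtain n where n: "n \<in> R k" "\<gamma> * m ^ n \<le> N" "N < K * m ^ n"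
      using power_bracket_in_R[OF assms(6), of m \<gamma> N] N assms(4,5)
      unfolding K_def by (auto simp: algebra_simps)
    have "0 < \<gamma> * m ^ n"
      using assms(4,5) by simp
    with n(2) have "0 < N"
      by linarith
    have "K * M0 < K * m ^ n"
      using N n(3) by linarith
    then have "c * m ^ n \<le> card (A \<inter> {m ^ n..\<gamma> * m ^ n})"
      by (intro M0) simp
    then show "c / K \<le> count_ratio (A \<inter> (\<Union>n\<in>R k. {m ^ n .. \<gamma> * m ^ n})) N"
      using n assms(1) \<open>c > 0\<close> \<open>0 < N\<close>
      by (intro count_ratio_ge_of_subset[where M = "m ^ n"]) (auto simp flip: of_nat_mult of_nat_power)
  qed
qed

end
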